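(* Under the standing setup below, let $\boldsymbol\beta,\boldsymbol\nu\in(0,\infty)^N$. Then any globally optimal solution $(\mathbf p^\#,\mathbf B^\#)$ of Problem $\mathbb P_3(\boldsymbol\beta,\boldsymbol\nu)$ can be given by $$B_n^\#=\mathcal B_n(\lambda^\#),\qquad p_n^\#=\frac{\sigma_n^2 B_n^\#\,\psi_n(\lambda^\#)}{g_n}\qquad(n\in\mathcal N),$$ where $\lambda^\#>0$ is a solution of $\sum_{n\in\mathcal N}\mathcal B_n(\lambda)=B_{total}$, and for $\lambda\ge 0$: $$\psi_n(\lambda)=\exp\Big\{1+W\Big(\tfrac1e\big(\tfrac{g_n\lambda}{\nu_n\beta_n\sigma_n^2}-1\big)\Big)\Big\}-1,\qquad \mathcal B_n(\lambda)=\frac{\max\{\gamma_n(\lambda),\,r_n^{\min}\}}{\log_2(1+\psi_n(\lambda))},$$ $$\gamma_n(\lambda)=\begin{cases} r_{n,e}+\xi, & \text{if there is } \xi\ge0 \text{ with } f_n'(\xi)=\dfrac{\beta_n\sigma_n^2(1+\psi_n(\lambda))\ln 2}{c_n g_n},\\ r_{n,e}, & \text{otherwise.}\end{cases}$$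
   Context: Standing setup: $N\ge1$ users, $\mathcal N=\{1,\dots,N\}$, total bandwidth $B_{total}>0$. For each $n$: constants $g_n>0$, $\sigma_n^2>0$, $p_n^{cir}>0$, weight $c_n>0$, $r_{n,e}\ge 0$, $r_n^{\min}>0$ with $r_n^{\min}\ge r_{n,e}$. Rate $r_n(p,B)=B\log_2\!\big(1+\frac{g_n p}{\sigma_n^2 B}\big)$ ($p\ge0$, $B>0$), secrecy rate $r_{n,s}(p,B)=r_n(p,B)-r_{n,e}$. Utility $f_n:(0,\infty)\to\mathbb R$ is twice differentiable with $f_n'>0$, $f_n''\le 0$ on $(0,\infty)$; $f_n(0)$, $f_n'(0)$ are defined as the corresponding limits at $0^+$ when finite. $F_n(p,B)=c_n f_n(r_{n,s}(p,B))$. Problem $\mathbb P_3(\boldsymbol\beta,\boldsymbol\nu)$: maximize $\sum_n \nu_n\big(F_n(p_n,B_n)-\beta_n(p_n+p_n^{cir})\big)$ over $(\mathbf p,\mathbf B)$ with $p_n\ge0,B_n>0$ subject to $\sum_n B_n\le B_{total}$ and $r_n(p_n,B_n)\ge r_n^{\min}$ for all $n$. $W$ denotes the principal branch of the Lambert $W$ function: for $z\ge -e^{-1}$, $W(z)$ is the solution $x\ge-1$ of $xe^x=z$. *)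

theory Defs
  imports "HOL-Analysis.Analysis"
begin

text \<open>Principal branch of Lambert W: for z \<ge> -1/e, the solution x \<ge> -1 of x e^x = z.\<close>
definition LambertW :: "real \<Rightarrow> real" where
  "LambertW z = (THE x. x \<ge> -1 \<and> x * exp x = z)"

definition rate :: "real \<Rightarrow> real \<Rightarrow> real \<Rightarrow> real \<Rightarrow> real" where
  "rate g s2 p B = B * log 2 (1 + g * p / (s2 * B))"

definition uval :: "(real \<Rightarrow> real) \<Rightarrow> real \<Rightarrow> real" where
  "uval f x = (if x > 0 then f x else Lim (at_right 0) f)"

definition P3_feasible ::
  "nat \<Rightarrow> real \<Rightarrow> (nat \<Rightarrow> real) \<Rightarrow> (nat \<Rightarrow> real) \<Rightarrow> (nat \<Rightarrow> real)
   \<Rightarrow> (nat \<Rightarrow> real) \<Rightarrow> (nat \<Rightarrow> real) \<Rightarrow> bool" where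
  "P3_feasible N Btot g s2 rmin p B \<longleftrightarrow>
     (\<forall>n\<in>{1..N}. p n \<ge> 0 \<and> B n > 0 \<and> rate (g n) (s2 n) (p n) (B n) \<ge> rmin n) \<and>
     (\<Sum>n\<in>{1..N}. B n) \<le> Btot"

text \<open>Feasible points at which the objective is a finite real number
  (the utility at secrecy rate 0 is the limit at 0+, required to be finite).\<close>
definition P3_admissible ::
  "nat \<Rightarrow> real \<Rightarrow> (nat \<Rightarrow> real) \<Rightarrow> (nat \<Rightarrow> real) \<Rightarrow> (nat \<Rightarrow> real) \<Rightarrow> (nat \<Rightarrow> real)
   \<Rightarrow> (nat \<Rightarrow> real \<Rightarrow> real) \<Rightarrow> (nat \<Rightarrow> real) \<Rightarrow> (nat \<Rightarrow> real) \<Rightarrow> bool" where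
  "P3_admissible N Btot g s2 re rmin f p B \<longleftrightarrow>
     P3_feasible N Btot g s2 rmin p B \<and>
     (\<forall>n\<in>{1..N}. rate (g n) (s2 n) (p n) (B n) - re n > 0 \<or>
                  (\<exists>L. (f n \<longlongrightarrow> L) (at_right 0)))"

definition P3_obj ::
  "nat \<Rightarrow> (nat \<Rightarrow> real) \<Rightarrow> (nat \<Rightarrow> real) \<Rightarrow> (nat \<Rightarrow> real) \<Rightarrow> (nat \<Rightarrow> real) \<Rightarrow> (nat \<Rightarrow> real)
   \<Rightarrow> (nat \<Rightarrow> real \<Rightarrow> real) \<Rightarrow> (nat \<Rightarrow> real) \<Rightarrow> (nat \<Rightarrow> real)
   \<Rightarrow> (nat \<Rightarrow> real) \<Rightarrow> (nat \<Rightarrow> real) \<Rightarrow> real" where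
  "P3_obj N g s2 pcir c re f \<beta> \<nu> p B =
     (\<Sum>n\<in>{1..N}. \<nu> n * (c n * uval (f n) (rate (g n) (s2 n) (p n) (B n) - re n)
                          - \<beta> n * (p n + pcir n)))"

definition P3_global_opt ::
  "nat \<Rightarrow> real \<Rightarrow> (nat \<Rightarrow> real) \<Rightarrow> (nat \<Rightarrow> real) \<Rightarrow> (nat \<Rightarrow> real) \<Rightarrow> (nat \<Rightarrow> real)
   \<Rightarrow> (nat \<Rightarrow> real) \<Rightarrow> (nat \<Rightarrow> real) \<Rightarrow> (nat \<Rightarrow> real \<Rightarrow> real) \<Rightarrow> (nat \<Rightarrow> real) \<Rightarrow> (nat \<Rightarrow> real)
   \<Rightarrow> (nat \<Rightarrow> real) \<Rightarrow> (nat \<Rightarrow> real) \<Rightarrow> bool" where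
  "P3_global_opt N Btot g s2 pcir c re rmin f \<beta> \<nu> p B \<longleftrightarrow>
     P3_admissible N Btot g s2 re rmin f p B \<and>
     (\<forall>p' B'. P3_admissible N Btot g s2 re rmin f p' B' \<longrightarrow>
        P3_obj N g s2 pcir c re f \<beta> \<nu> p' B' \<le> P3_obj N g s2 pcir c re f \<beta> \<nu> p B)"

definition psi :: "real \<Rightarrow> real \<Rightarrow> real \<Rightarrow> real \<Rightarrow> real \<Rightarrow> real" where
  "psi g s2 \<beta> \<nu> lam = exp (1 + LambertW ((1 / exp 1) * (g * lam / (\<nu> * \<beta> * s2) - 1))) - 1"

text \<open>f'(xi) = t for xi \<ge> 0, where f'(0) means the (finite) limit of f' at 0+.\<close>
definition deriv_eq :: "(real \<Rightarrow> real) \<Rightarrow> real \<Rightarrow> real \<Rightarrow> bool" where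
  "deriv_eq fd \<xi> t \<longleftrightarrow> (\<xi> > 0 \<and> fd \<xi> = t) \<or> (\<xi> = 0 \<and> (fd \<longlongrightarrow> t) (at_right 0))"

text \<open>gam is an admissible value of gamma_n(lambda), given psi = psi_n(lambda).\<close>
definition gamma_spec :: "(real \<Rightarrow> real) \<Rightarrow> real \<Rightarrow> real \<Rightarrow> real \<Rightarrow> real \<Rightarrow> real \<Rightarrow> real \<Rightarrow> real \<Rightarrow> bool" where
  "gamma_spec fd re \<beta> s2 c g ps gam \<longleftrightarrow>
     (let t = \<beta> * s2 * (1 + ps) * ln 2 / (c * g) in
      if (\<exists>\<xi>\<ge>0. deriv_eq fd \<xi> t) then (\<exists>\<xi>\<ge>0. deriv_eq fd \<xi> t \<and> gam = re + \<xi>)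
      else gam = re)"

definition Bcal :: "real \<Rightarrow> real \<Rightarrow> real \<Rightarrow> real" where
  "Bcal gam rmin ps = max gam rmin / log 2 (1 + ps)"

end

theory Submission
  imports Defs
begin

text \<open>Fix the bandwidths: each user's power then solves a concave one-dimensional problem
  whose first-order conditions pin the secrecy rate to the root \<open>\<gamma>\<close> of
  \<open>f'(\<xi>) = \<beta> \<sigma>\<^sup>2 (1 + x) ln 2 / (c g)\<close>, or to the rate floor, \<open>x\<close> being the user's SNR.
  Fix instead the rates and move bandwidth between users: only the powers change, and the power
  needed for a fixed rate falls with the bandwidth at rate \<open>\<lambda>\<^sub>n / (\<nu>\<^sub>n \<beta>\<^sub>n)\<close>, where
  \<open>\<lambda>\<^sub>n = \<nu>\<^sub>n \<beta>\<^sub>n \<sigma>\<^sub>n\<^sup>2 ((1 + x\<^sub>n) ln (1 + x\<^sub>n) - x\<^sub>n) / g\<^sub>n > 0\<close>.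
  Hence an optimum uses all the bandwidth and equalises the \<open>\<lambda>\<^sub>n\<close>; solving
  \<open>\<lambda>\<^sub>n = \<lambda>\<close> for \<open>x\<^sub>n\<close> with Lambert \<open>W\<close> gives \<open>x\<^sub>n = \<psi>\<^sub>n(\<lambda>)\<close>, and \<open>B\<^sub>n\<close> is
  the rate divided by \<open>log\<^sub>2 (1 + x\<^sub>n)\<close>.\<close>

lemma mult_exp_strict_mono:
  fixes a b :: real
  assumes "-1 \<le> a" "a < b"
  shows "a * exp a < b * exp b"
proof (rule DERIV_pos_imp_increasing_open[OF assms(2)])
  fix x assume "a < x" "x < b"
  then have "0 < (1 + x) * exp x" using assms by simp
  moreover have "DERIV (\<lambda>u. u * exp u) x :> (1 + x) * exp x"
    by (auto intro!: derivative_eq_intros simp: algebra_simps)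
  ultimately show "\<exists>y. DERIV (\<lambda>u. u * exp u) x :> y \<and> y > 0" by blast
qed (intro continuous_intros)

lemma LambertW_mult_exp:
  fixes u :: real
  assumes "-1 \<le> u"
  shows "LambertW (u * exp u) = u"
  unfolding LambertW_def
proof (rule the_equality)
  fix y assume "-1 \<le> y \<and> y * exp y = u * exp u"
  then show "y = u" using mult_exp_strict_mono[of y u] mult_exp_strict_mono[of u y] assms
    by (metis linorder_neqE_linordered_idom order_less_irrefl)
qed (use assms in simp)

lemma one_plus_mult_ln_one_plus_gt:
  fixes x :: real
  assumes "x > 0"
  shows "x < (1 + x) * ln (1 + x)"
proof -
  have "(1 + 0) * ln (1 + 0) - (0::real) < (1 + x) * ln (1 + x) - x"
  proof (rule DERIV_pos_imp_increasing_open[OF assms, where f = "\<lambda>x. (1 + x) * ln (1 + x) - x"])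
    fix y :: real assume "0 < y" "y < x"
    then show "\<exists>d. DERIV (\<lambda>x. (1 + x) * ln (1 + x) - x) y :> d \<and> d > 0"
      by (intro exI[of _ "ln (1 + y)"]) (auto intro!: derivative_eq_intros simp: field_simps)
  qed (intro continuous_intros, auto)
  then show ?thesis by simp
qed

text \<open>The common shadow price \<open>\<lambda>\<close> of bandwidth, seen from a user at SNR
  \<open>x = g p / (\<sigma>\<^sup>2 B)\<close>: the weighted power it saves per unit of extra bandwidth at
  fixed rate. \<open>psi\<close> is its inverse in \<open>x\<close>.\<close>
definition bandwidth_price :: "real \<Rightarrow> real \<Rightarrow> real \<Rightarrow> real \<Rightarrow> real \<Rightarrow> real" where
  "bandwidth_price g s2 \<beta> \<nu> x = \<nu> * \<beta> * s2 * ((1 + x) * ln (1 + x) - x) / g"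

lemma bandwidth_price_pos:
  assumes "x > 0" "g > 0" "s2 > 0" "\<beta> > 0" "\<nu> > 0"
  shows "bandwidth_price g s2 \<beta> \<nu> x > 0"
  using one_plus_mult_ln_one_plus_gt[OF assms(1)] assms unfolding bandwidth_price_def by simp

lemma psi_bandwidth_price:
  assumes "x > 0" "g > 0" "s2 > 0" "\<beta> > 0" "\<nu> > 0"
  shows "psi g s2 \<beta> \<nu> (bandwidth_price g s2 \<beta> \<nu> x) = x"
proof -
  let ?u = "ln (1 + x) - 1"
  have "exp ?u = (1 + x) / exp 1" using assms by (simp add: exp_diff)
  then have "(1 / exp 1) * (g * bandwidth_price g s2 \<beta> \<nu> x / (\<nu> * \<beta> * s2) - 1) = ?u * exp ?u"
    using assms unfolding bandwidth_price_def by (simp add: field_simps)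
  moreover have "-1 \<le> ?u" using assms by simp
  ultimately show ?thesis unfolding psi_def using LambertW_mult_exp assms by simp
qed

lemma rate_has_derivative:
  assumes "g > 0" "s2 > 0" "B > 0" "p \<ge> 0"
  shows "DERIV (\<lambda>q. rate g s2 q B) p :> g / (s2 * ln 2 * (1 + g * p / (s2 * B)))"
proof -
  define x where "x = g * p / (s2 * B)"
  have "0 < 1 + x" unfolding x_def using assms by (simp add: add_pos_nonneg)
  then have "DERIV (\<lambda>q. B * (ln (1 + g * q / (s2 * B)) / ln 2)) p
      :> B * (1 / (1 + x) * (g / (s2 * B)) / ln 2)"
    unfolding x_def using assms by (auto intro!: derivative_eq_intros)
  moreover have "B * (1 / (1 + x) * (g / (s2 * B)) / ln 2) = g / (s2 * ln 2 * (1 + x))"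
    using assms \<open>0 < 1 + x\<close> by simp
  ultimately show ?thesis unfolding rate_def log_def x_def by simp
qed

lemma rate_strict_mono:
  assumes "g > 0" "s2 > 0" "B > 0" "0 \<le> p" "p < q"
  shows "rate g s2 p B < rate g s2 q B"
proof -
  have "1 + g * p / (s2 * B) < 1 + g * q / (s2 * B)" using assms by (simp add: divide_strict_right_mono)
  moreover have "0 < 1 + g * p / (s2 * B)" using assms by (simp add: add_pos_nonneg)
  ultimately show ?thesis unfolding rate_def using assms by simp
qed

lemma rate_zero [simp]: "rate g s2 0 B = 0"
  unfolding rate_def by simp

lemma rate_nonneg:
  assumes "g > 0" "s2 > 0" "B > 0" "0 \<le> p"
  shows "0 \<le> rate g s2 p B"
  using rate_strict_mono[of g s2 B 0 p] assms by (cases "p = 0") auto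

definition power_for_rate :: "real \<Rightarrow> real \<Rightarrow> real \<Rightarrow> real \<Rightarrow> real" where
  "power_for_rate g s2 r B = s2 / g * B * (2 powr (r / B) - 1)"

lemma rate_power_for_rate:
  assumes "g > 0" "s2 > 0" "B > 0"
  shows "rate g s2 (power_for_rate g s2 r B) B = r"
proof -
  have "1 + g * power_for_rate g s2 r B / (s2 * B) = 2 powr (r / B)"
    unfolding power_for_rate_def using assms by (simp add: field_simps)
  then show ?thesis unfolding rate_def using assms by simp
qed

lemma power_for_rate_nonneg:
  assumes "g > 0" "s2 > 0" "B > 0" "r \<ge> 0"
  shows "power_for_rate g s2 r B \<ge> 0"
proof -
  have "2 powr (r / B) \<ge> 1" using assms by (intro ge_one_powr_ge_zero) auto
  then show ?thesis unfolding power_for_rate_def using assms by simp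
qed

lemma power_for_rate_rate:
  assumes "g > 0" "s2 > 0" "B > 0" "p \<ge> 0"
  shows "power_for_rate g s2 (rate g s2 p B) B = p"
proof -
  have "2 powr (rate g s2 p B / B) = 1 + g * p / (s2 * B)"
    using assms unfolding rate_def by (simp add: add_pos_nonneg)
  then show ?thesis unfolding power_for_rate_def using assms by (simp add: field_simps)
qed

lemma power_for_rate_has_derivative:
  assumes "g > 0" "s2 > 0" "B > 0" "p \<ge> 0"
  shows "DERIV (\<lambda>b. \<nu> * \<beta> * power_for_rate g s2 (rate g s2 p B) b) B
           :> - bandwidth_price g s2 \<beta> \<nu> (g * p / (s2 * B))"
proof -
  define x where "x = g * p / (s2 * B)"
  define r where "r = rate g s2 p B"
  have "1 + x > 0" unfolding x_def using assms by (simp add: add_pos_nonneg)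
  then have ln: "r / B * ln 2 = ln (1 + x)"
    unfolding r_def x_def rate_def log_def using assms by simp
  then have exp: "exp (r / B * ln 2) = 1 + x" using \<open>1 + x > 0\<close> by simp
  have "power_for_rate g s2 r = (\<lambda>b. s2 / g * b * (exp (r / b * ln 2) - 1))"
    unfolding power_for_rate_def[abs_def] by (simp add: powr_def mult.commute)
  moreover have "DERIV (\<lambda>b. \<nu> * \<beta> * (s2 / g * b * (exp (r / b * ln 2) - 1))) B
      :> \<nu> * \<beta> * (s2 / g * (exp (r / B * ln 2) - 1)
                  - s2 / g * exp (r / B * ln 2) * (r / B * ln 2))"
    using assms by (auto intro!: derivative_eq_intros simp: power2_eq_square field_simps)
  moreover have "\<nu> * \<beta> * (s2 / g * (exp (r / B * ln 2) - 1)
                  - s2 / g * exp (r / B * ln 2) * (r / B * ln 2))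
      = - bandwidth_price g s2 \<beta> \<nu> x"
    unfolding exp unfolding ln bandwidth_price_def using assms by (simp add: field_simps)
  ultimately show ?thesis unfolding x_def r_def by simp
qed

lemma uval_pos [simp]: "0 < x \<Longrightarrow> uval f x = f x"
  unfolding uval_def by simp

lemma deriv_mult_le_increment_from_zero:
  fixes f fd :: "real \<Rightarrow> real"
  assumes f_deriv: "\<And>x. 0 < x \<Longrightarrow> (f has_real_derivative fd x) (at x)"
    and fd_antitone: "\<And>a b. 0 < a \<Longrightarrow> a \<le> b \<Longrightarrow> fd b \<le> fd a"
    and lim: "(f \<longlongrightarrow> L) (at_right 0)"
    and "0 < h"
  shows "fd h * h \<le> f h - L"
proof -
  have "\<forall>\<^sub>F a in at_right 0. fd h * (h - a) \<le> f h - f a"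
    unfolding eventually_at_right_field
  proof (intro exI[of _ h] conjI allI impI)
    fix a :: real assume a: "0 < a" "a < h"
    then obtain z where z: "a < z" "z < h" "f h - f a = (h - a) * fd z"
      using MVT2[of a h f fd] f_deriv by force
    then have "fd h \<le> fd z" using fd_antitone a by simp
    then show "fd h * (h - a) \<le> f h - f a" using z a by (simp add: mult.commute mult_right_mono)
  qed (use \<open>0 < h\<close> in simp)
  moreover have "((\<lambda>a. fd h * (h - a)) \<longlongrightarrow> fd h * (h - 0)) (at_right 0)"
    by (intro tendsto_intros)
  moreover have "((\<lambda>a. f h - f a) \<longlongrightarrow> f h - L) (at_right 0)"
    by (intro tendsto_intros lim)
  ultimately show ?thesis by (auto intro: tendsto_le[of "at_right (0::real)"])
qed

lemma deriv_eq_root_le: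
  fixes fd :: "real \<Rightarrow> real"
  assumes fd_antitone: "\<And>a b. 0 < a \<Longrightarrow> a \<le> b \<Longrightarrow> fd b \<le> fd a"
    and \<xi>: "0 \<le> \<xi>" "deriv_eq fd \<xi> t" and "0 \<le> s"
    and up: "0 < s \<Longrightarrow> fd s \<le> t"
    and zero: "\<And>h. s = 0 \<Longrightarrow> 0 < h \<Longrightarrow> fd h \<le> t"
  shows "\<exists>\<zeta>. 0 \<le> \<zeta> \<and> \<zeta> \<le> s \<and> deriv_eq fd \<zeta> t"
proof (cases "\<xi> \<le> s")
  case False
  then have "fd \<xi> = t" using \<xi> \<open>0 \<le> s\<close> unfolding deriv_eq_def by auto
  show ?thesis
  proof (cases "s = 0")
    case True
    have "\<forall>\<^sub>F y in at_right 0. fd y = t"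
      unfolding eventually_at_right_field
    proof (intro exI[of _ \<xi>] conjI allI impI)
      fix y :: real assume "0 < y" "y < \<xi>"
      then show "fd y = t" using fd_antitone[of y \<xi>] zero[OF True, of y] \<open>fd \<xi> = t\<close> by simp
    qed (use False True in simp)
    then have "deriv_eq fd 0 t" unfolding deriv_eq_def by (simp add: tendsto_eventually)
    then show ?thesis using True by blast
  next
    case False
    then have "fd s = t" using up fd_antitone[of s \<xi>] \<open>fd \<xi> = t\<close> \<open>\<not> \<xi> \<le> s\<close> \<open>0 \<le> s\<close> by fastforce
    then show ?thesis using False \<open>0 \<le> s\<close> unfolding deriv_eq_def by auto
  qed
qed (use \<xi> in blast)

lemma gamma_spec_exists:
  fixes fd :: "real \<Rightarrow> real"
  assumes fd_antitone: "\<And>a b. 0 < a \<Longrightarrow> a \<le> b \<Longrightarrow> fd b \<le> fd a"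
    and t: "t = \<beta> * s2 * (1 + ps) * ln 2 / (c * g)"
    and "0 \<le> s" "re \<le> rmin" "rmin \<le> re + s"
    and up: "0 < s \<Longrightarrow> fd s \<le> t"
    and interior: "rmin < re + s \<Longrightarrow> fd s = t"
    and zero: "\<And>h. s = 0 \<Longrightarrow> 0 < h \<Longrightarrow> fd h \<le> t"
  shows "\<exists>gam. gamma_spec fd re \<beta> s2 c g ps gam \<and> max gam rmin = re + s"
proof (cases "\<exists>\<xi>\<ge>0. deriv_eq fd \<xi> t")
  case False
  then have "\<not> rmin < re + s"
    using interior \<open>re \<le> rmin\<close> \<open>0 \<le> s\<close> unfolding deriv_eq_def by fastforce
  then have "max re rmin = re + s" using assms(3-5) by simp
  moreover have "gamma_spec fd re \<beta> s2 c g ps re"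
    using False unfolding gamma_spec_def Let_def t by simp
  ultimately show ?thesis by blast
next
  case True
  have "\<exists>\<zeta>. 0 \<le> \<zeta> \<and> \<zeta> \<le> s \<and> deriv_eq fd \<zeta> t \<and> (rmin < re + s \<longrightarrow> \<zeta> = s)"
  proof (cases "rmin < re + s")
    case True
    then show ?thesis using interior \<open>re \<le> rmin\<close> unfolding deriv_eq_def by auto
  next
    case False
    obtain \<xi> where \<xi>: "0 \<le> \<xi>" "deriv_eq fd \<xi> t" using True by blast
    show ?thesis
      using deriv_eq_root_le[where fd = fd and s = s, OF fd_antitone \<xi> \<open>0 \<le> s\<close> up zero] False by blast
  qed
  then obtain \<zeta> where "0 \<le> \<zeta>" "\<zeta> \<le> s" "deriv_eq fd \<zeta> t" "rmin < re + s \<longrightarrow> \<zeta> = s"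
    by blast
  moreover from this have "gamma_spec fd re \<beta> s2 c g ps (re + \<zeta>)"
    unfolding gamma_spec_def Let_def t[symmetric] by auto
  ultimately show ?thesis using assms(5) by (intro exI[of _ "re + \<zeta>"]) auto
qed

definition user_admissible ::
  "real \<Rightarrow> real \<Rightarrow> real \<Rightarrow> real \<Rightarrow> (real \<Rightarrow> real) \<Rightarrow> real \<Rightarrow> real \<Rightarrow> bool" where
  "user_admissible g s2 re rmin f p B \<longleftrightarrow>
     0 \<le> p \<and> 0 < B \<and> rmin \<le> rate g s2 p B \<and>
     (0 < rate g s2 p B - re \<or> (\<exists>L. (f \<longlongrightarrow> L) (at_right 0)))"

locale optimal_user_power =
  fixes g s2 c \<beta> re rmin B p :: real and f fd :: "real \<Rightarrow> real"
  assumes params: "0 < g" "0 < s2" "0 < c" "0 < \<beta>" "re \<le> rmin" "0 < rmin"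
    and admissible: "user_admissible g s2 re rmin f p B"
    and f_deriv: "\<And>x. 0 < x \<Longrightarrow> (f has_real_derivative fd x) (at x)"
    and fd_antitone: "\<And>a b. 0 < a \<Longrightarrow> a \<le> b \<Longrightarrow> fd b \<le> fd a"
    and optimal: "\<And>q. user_admissible g s2 re rmin f q B \<Longrightarrow>
       c * uval f (rate g s2 q B - re) - \<beta> * q \<le> c * uval f (rate g s2 p B - re) - \<beta> * p"
begin

abbreviation secrecy :: real where
  "secrecy \<equiv> rate g s2 p B - re"

definition marginal_rate :: real where
  "marginal_rate = g / (s2 * ln 2 * (1 + g * p / (s2 * B)))"

definition threshold :: real where
  "threshold = \<beta> * s2 * (1 + g * p / (s2 * B)) * ln 2 / (c * g)"

lemma power_nonneg: "0 \<le> p" and bandwidth_pos: "0 < B" and rate_ge: "rmin \<le> rate g s2 p B"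
  using admissible unfolding user_admissible_def by auto

lemma secrecy_nonneg: "0 \<le> secrecy"
  using rate_ge params by simp

lemma power_pos: "0 < p"
  using power_nonneg rate_ge params by (cases "p = 0") auto

lemma rate_deriv_at_power: "DERIV (\<lambda>q. rate g s2 q B) p :> marginal_rate"
  unfolding marginal_rate_def using rate_has_derivative params power_nonneg bandwidth_pos by simp

lemma threshold_mult_marginal_rate: "threshold * (c * marginal_rate) = \<beta>"
  and marginal_rate_pos: "0 < marginal_rate"
proof -
  define x where "x = g * p / (s2 * B)"
  have "0 < 1 + x" unfolding x_def using params power_nonneg bandwidth_pos by (simp add: add_pos_nonneg)
  then show "threshold * (c * marginal_rate) = \<beta>" "0 < marginal_rate"
    unfolding threshold_def marginal_rate_def x_def[symmetric] using params by auto
qed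

lemma threshold_less_iff: "threshold < y \<longleftrightarrow> \<beta> < c * y * marginal_rate"
proof -
  have "threshold < y \<longleftrightarrow> threshold * (c * marginal_rate) < y * (c * marginal_rate)"
    using marginal_rate_pos params by simp
  then show ?thesis unfolding threshold_mult_marginal_rate by (simp add: ac_simps)
qed

lemma eq_threshold_iff: "y = threshold \<longleftrightarrow> c * y * marginal_rate = \<beta>"
proof -
  have "y = threshold \<longleftrightarrow> y * (c * marginal_rate) = threshold * (c * marginal_rate)"
    using marginal_rate_pos params by simp
  then show ?thesis unfolding threshold_mult_marginal_rate by (simp add: ac_simps)
qed

lemma objective_has_derivative:
  assumes "0 < secrecy"
  shows "DERIV (\<lambda>q. c * f (rate g s2 q B - re) - \<beta> * q) p :> c * fd secrecy * marginal_rate - \<beta>"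
  using f_deriv[OF assms] rate_deriv_at_power
  by (auto intro!: derivative_eq_intros DERIV_chain2[of f])

lemma objective_le:
  assumes "user_admissible g s2 re rmin f q B" "0 < rate g s2 q B - re" "0 < secrecy"
  shows "c * f (rate g s2 q B - re) - \<beta> * q \<le> c * f secrecy - \<beta> * p"
  using optimal[OF assms(1)] assms(2,3) by simp

lemma deriv_secrecy_le_threshold:
  assumes "0 < secrecy"
  shows "fd secrecy \<le> threshold"
proof (rule ccontr)
  assume "\<not> fd secrecy \<le> threshold"
  then have "0 < c * fd secrecy * marginal_rate - \<beta>"
    using threshold_less_iff[of "fd secrecy"] by (simp add: not_le)
  from DERIV_pos_inc_right[OF objective_has_derivative[OF assms] this] obtain d where
    "0 < d" and d: "\<And>h. 0 < h \<Longrightarrow> h < d \<Longrightarrow>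
      c * f secrecy - \<beta> * p < c * f (rate g s2 (p + h) B - re) - \<beta> * (p + h)"
    by blast
  define h where "h = d / 2"
  have "0 < h" "h < d" unfolding h_def using \<open>0 < d\<close> by auto
  have "rate g s2 p B < rate g s2 (p + h) B"
    using rate_strict_mono params power_nonneg bandwidth_pos \<open>0 < h\<close> by simp
  then have "user_admissible g s2 re rmin f (p + h) B" "0 < rate g s2 (p + h) B - re"
    using admissible assms \<open>0 < h\<close> unfolding user_admissible_def by auto
  from objective_le[OF this assms] d[OF \<open>0 < h\<close> \<open>h < d\<close>] show False by simp
qed

lemma deriv_secrecy_eq_threshold:
  assumes "rmin < rate g s2 p B"
  shows "fd secrecy = threshold"
proof -
  have "0 < secrecy" using assms params by simp
  have "isCont (\<lambda>q. rate g s2 q B) p" using DERIV_isCont[OF rate_deriv_at_power] .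
  then have "\<forall>\<^sub>F q in at p. rmin < rate g s2 q B"
    using assms unfolding isCont_def by (rule order_tendstoD(1))
  then obtain d where "0 < d" and d: "\<And>q. q \<noteq> p \<Longrightarrow> dist q p < d \<Longrightarrow> rmin < rate g s2 q B"
    unfolding eventually_at by blast
  have "\<forall>q. \<bar>p - q\<bar> < min d p \<longrightarrow>
      c * f (rate g s2 q B - re) - \<beta> * q \<le> c * f (rate g s2 p B - re) - \<beta> * p"
  proof (intro allI impI)
    fix q assume q: "\<bar>p - q\<bar> < min d p"
    show "c * f (rate g s2 q B - re) - \<beta> * q \<le> c * f (rate g s2 p B - re) - \<beta> * p"
    proof (cases "q = p")
      case False
      then have "rmin < rate g s2 q B" using d q by (simp add: dist_real_def abs_minus_commute)
      then have "user_admissible g s2 re rmin f q B" "0 < rate g s2 q B - re"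
        using q params bandwidth_pos unfolding user_admissible_def by auto
      from objective_le[OF this \<open>0 < secrecy\<close>] show ?thesis .
    qed simp
  qed
  from DERIV_local_max[OF objective_has_derivative[OF \<open>0 < secrecy\<close>] _ this]
  have "c * fd secrecy * marginal_rate = \<beta>" using \<open>0 < d\<close> power_pos by simp
  then show ?thesis using eq_threshold_iff by simp
qed

lemma small_rate_gain:
  assumes "\<beta> < \<kappa> * marginal_rate" "0 < \<epsilon>"
  shows "\<exists>h>0. rate g s2 (p + h) B - rate g s2 p B < \<epsilon>
               \<and> \<beta> * h < \<kappa> * (rate g s2 (p + h) B - rate g s2 p B)"
proof -
  have "DERIV (\<lambda>q. \<kappa> * rate g s2 q B - \<beta> * q) p :> \<kappa> * marginal_rate - \<beta>"
    by (auto intro!: derivative_eq_intros rate_deriv_at_power)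
  from DERIV_pos_inc_right[OF this] obtain d1 where "0 < d1" and d1: "\<And>h. 0 < h \<Longrightarrow> h < d1 \<Longrightarrow>
      \<kappa> * rate g s2 p B - \<beta> * p < \<kappa> * rate g s2 (p + h) B - \<beta> * (p + h)"
    using assms(1) by auto
  have "isCont (\<lambda>q. rate g s2 q B) p" using DERIV_isCont[OF rate_deriv_at_power] .
  then have "\<forall>\<^sub>F q in at p. rate g s2 q B < rate g s2 p B + \<epsilon>"
    using assms(2) unfolding isCont_def by (intro order_tendstoD(2)) auto
  then obtain d2 where "0 < d2"
    and d2: "\<And>q. q \<noteq> p \<Longrightarrow> dist q p < d2 \<Longrightarrow> rate g s2 q B < rate g s2 p B + \<epsilon>"
    unfolding eventually_at by blast
  define h where "h = min d1 d2 / 2"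
  have "0 < h" "h < d1" "h < d2" unfolding h_def using \<open>0 < d1\<close> \<open>0 < d2\<close> by auto
  then show ?thesis
    using d1[of h] d2[of "p + h"] by (intro exI[of _ h]) (auto simp: dist_real_def algebra_simps)
qed

lemma deriv_le_threshold_of_secrecy_zero:
  assumes "secrecy = 0" "0 < h0"
  shows "fd h0 \<le> threshold"
proof (rule ccontr)
  assume "\<not> fd h0 \<le> threshold"
  then have "\<beta> < c * fd h0 * marginal_rate" using threshold_less_iff by (simp add: not_le)
  from small_rate_gain[OF this \<open>0 < h0\<close>] obtain h where "0 < h"
    and R: "rate g s2 (p + h) B - re < h0" "\<beta> * h < c * fd h0 * (rate g s2 (p + h) B - re)"
    using assms(1) by auto
  define R where "R = rate g s2 (p + h) B - re"
  obtain L where L: "(f \<longlongrightarrow> L) (at_right 0)"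
    using admissible assms(1) unfolding user_admissible_def by auto
  then have "uval f secrecy = L" using assms(1) unfolding uval_def by (simp add: tendsto_Lim)
  have "rate g s2 p B < rate g s2 (p + h) B"
    using rate_strict_mono params power_nonneg bandwidth_pos \<open>0 < h\<close> by simp
  then have "0 < R" and "user_admissible g s2 re rmin f (p + h) B"
    using admissible assms(1) \<open>0 < h\<close> unfolding R_def user_admissible_def by auto
  from optimal[OF this(2)] have "c * f R - \<beta> * (p + h) \<le> c * L - \<beta> * p"
    using \<open>0 < R\<close> \<open>uval f secrecy = L\<close> unfolding R_def by simp
  moreover have "fd h0 * R \<le> f R - L"
    using deriv_mult_le_increment_from_zero[OF f_deriv fd_antitone L \<open>0 < R\<close>]
      fd_antitone[of R h0] \<open>0 < R\<close> R(1) unfolding R_def by (smt (verit) mult_right_mono)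
  then have "c * (fd h0 * R) \<le> c * (f R - L)" using params by simp
  ultimately show False using R(2) unfolding R_def by (simp add: algebra_simps)
qed

lemma user_gamma:
  "\<exists>gam. gamma_spec fd re \<beta> s2 c g (g * p / (s2 * B)) gam \<and> max gam rmin = rate g s2 p B"
  using gamma_spec_exists[OF fd_antitone threshold_def secrecy_nonneg params(5)]
    deriv_secrecy_le_threshold deriv_secrecy_eq_threshold deriv_le_threshold_of_secrecy_zero rate_ge
  by simp

end

lemma user_admissible_snr_pos:
  assumes "user_admissible g s2 re rmin f p B" "0 < g" "0 < s2" "0 < rmin"
  shows "0 < g * p / (s2 * B)"
proof -
  have "p \<noteq> 0" using assms unfolding user_admissible_def by auto
  then show ?thesis using assms unfolding user_admissible_def by simp
qed

lemma user_admissible_power_for_rate: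
  assumes "user_admissible g s2 re rmin f p B" "0 < g" "0 < s2" "0 < b"
  shows "user_admissible g s2 re rmin f (power_for_rate g s2 (rate g s2 p B) b) b"
  using assms rate_nonneg[of g s2 B p] power_for_rate_nonneg[of g s2 b "rate g s2 p B"]
  unfolding user_admissible_def by (simp add: rate_power_for_rate)

lemma P3_admissible_iff:
  "P3_admissible N Btot g s2 re rmin f p B \<longleftrightarrow>
     (\<forall>n\<in>{1..N}. user_admissible (g n) (s2 n) (re n) (rmin n) (f n) (p n) (B n)) \<and>
     (\<Sum>n\<in>{1..N}. B n) \<le> Btot"
  unfolding P3_admissible_def P3_feasible_def user_admissible_def by auto

lemma P3_global_opt_single_user:
  assumes opt: "P3_global_opt N Btot g s2 pcir c re rmin f \<beta> \<nu> p B"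
    and n: "n \<in> {1..N}" and "0 < \<nu> n"
    and q: "user_admissible (g n) (s2 n) (re n) (rmin n) (f n) q (B n)"
  shows "c n * uval (f n) (rate (g n) (s2 n) q (B n) - re n) - \<beta> n * q
           \<le> c n * uval (f n) (rate (g n) (s2 n) (p n) (B n) - re n) - \<beta> n * p n"
proof -
  define obj where "obj k x = \<nu> k * (c k * uval (f k) (rate (g k) (s2 k) x (B k) - re k)
                                    - \<beta> k * (x + pcir k))" for k x
  have obj_split: "P3_obj N g s2 pcir c re f \<beta> \<nu> p' B = obj n (p' n) + (\<Sum>k\<in>{1..N} - {n}. obj k (p' k))"
    for p'
    unfolding P3_obj_def obj_def using sum.remove[OF finite_atLeastAtMost n] by blast
  have "P3_admissible N Btot g s2 re rmin f (p(n := q)) B"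
    using opt q unfolding P3_global_opt_def P3_admissible_iff by auto
  then have "P3_obj N g s2 pcir c re f \<beta> \<nu> (p(n := q)) B \<le> P3_obj N g s2 pcir c re f \<beta> \<nu> p B"
    using opt unfolding P3_global_opt_def by blast
  moreover have "(\<Sum>k\<in>{1..N} - {n}. obj k ((p(n := q)) k)) = (\<Sum>k\<in>{1..N} - {n}. obj k (p k))"
    by (rule sum.cong) auto
  ultimately have "obj n q \<le> obj n (p n)" unfolding obj_split by simp
  then have "c n * uval (f n) (rate (g n) (s2 n) q (B n) - re n) - \<beta> n * (q + pcir n)
      \<le> c n * uval (f n) (rate (g n) (s2 n) (p n) (B n) - re n) - \<beta> n * (p n + pcir n)"
    unfolding obj_def using \<open>0 < \<nu> n\<close> by (simp add: mult_le_cancel_left_pos)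
  then show ?thesis by (simp add: algebra_simps)
qed

text \<open>Moving bandwidth while re-solving each power for the old rate leaves every utility
  unchanged, so only the weighted power can change.\<close>
lemma P3_global_opt_min_weighted_power:
  assumes opt: "P3_global_opt N Btot g s2 pcir c re rmin f \<beta> \<nu> p B"
    and params: "\<forall>n\<in>{1..N}. 0 < g n \<and> 0 < s2 n"
    and B': "\<forall>n\<in>{1..N}. 0 < B' n" "(\<Sum>n\<in>{1..N}. B' n) \<le> Btot"
  shows "(\<Sum>n\<in>{1..N}. \<nu> n * \<beta> n * p n)
           \<le> (\<Sum>n\<in>{1..N}. \<nu> n * \<beta> n * power_for_rate (g n) (s2 n) (rate (g n) (s2 n) (p n) (B n)) (B' n))"
proof -
  define p' where "p' n = power_for_rate (g n) (s2 n) (rate (g n) (s2 n) (p n) (B n)) (B' n)" for n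
  have adm: "\<forall>n\<in>{1..N}. user_admissible (g n) (s2 n) (re n) (rmin n) (f n) (p n) (B n)"
    using opt unfolding P3_global_opt_def P3_admissible_iff by blast
  have rates: "rate (g n) (s2 n) (p' n) (B' n) = rate (g n) (s2 n) (p n) (B n)" if "n \<in> {1..N}" for n
    unfolding p'_def using rate_power_for_rate params B' that by simp
  have "P3_admissible N Btot g s2 re rmin f p' B'"
    unfolding P3_admissible_iff p'_def using adm params B' user_admissible_power_for_rate by simp
  then have le: "P3_obj N g s2 pcir c re f \<beta> \<nu> p' B' \<le> P3_obj N g s2 pcir c re f \<beta> \<nu> p B"
    using opt unfolding P3_global_opt_def by blast
  define U where "U = (\<Sum>n\<in>{1..N}. \<nu> n * (c n * uval (f n) (rate (g n) (s2 n) (p n) (B n) - re n)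
                                           - \<beta> n * pcir n))"
  have "P3_obj N g s2 pcir c re f \<beta> \<nu> p' B' = U - (\<Sum>n\<in>{1..N}. \<nu> n * \<beta> n * p' n)"
    unfolding P3_obj_def U_def sum_subtractf[symmetric] by (rule sum.cong) (simp_all add: rates algebra_simps)
  moreover have "P3_obj N g s2 pcir c re f \<beta> \<nu> p B = U - (\<Sum>n\<in>{1..N}. \<nu> n * \<beta> n * p n)"
    unfolding P3_obj_def U_def sum_subtractf[symmetric] by (rule sum.cong) (simp_all add: algebra_simps)
  ultimately show ?thesis using le unfolding p'_def by simp
qed

lemma P3_global_opt_price_balance:
  assumes opt: "P3_global_opt N Btot g s2 pcir c re rmin f \<beta> \<nu> p B"
    and params: "\<forall>n\<in>{1..N}. 0 < g n \<and> 0 < s2 n"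
    and "0 < d"
    and feasible: "\<And>\<delta>. \<bar>\<delta>\<bar> < d \<Longrightarrow>
       (\<forall>n\<in>{1..N}. 0 < B n + \<delta> * e n) \<and> (\<Sum>n\<in>{1..N}. B n + \<delta> * e n) \<le> Btot"
  shows "(\<Sum>n\<in>{1..N}. bandwidth_price (g n) (s2 n) (\<beta> n) (\<nu> n) (g n * p n / (s2 n * B n)) * e n) = 0"
proof -
  define \<Phi> where "\<Phi> \<delta> = (\<Sum>n\<in>{1..N}. \<nu> n * \<beta> n *
      power_for_rate (g n) (s2 n) (rate (g n) (s2 n) (p n) (B n)) (B n + \<delta> * e n))" for \<delta>
  have adm: "\<forall>n\<in>{1..N}. user_admissible (g n) (s2 n) (re n) (rmin n) (f n) (p n) (B n)"
    using opt unfolding P3_global_opt_def P3_admissible_iff by blast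
  then have B: "\<forall>n\<in>{1..N}. 0 \<le> p n \<and> 0 < B n" unfolding user_admissible_def by blast
  have deriv: "DERIV \<Phi> 0 :>
      (\<Sum>n\<in>{1..N}. - bandwidth_price (g n) (s2 n) (\<beta> n) (\<nu> n) (g n * p n / (s2 n * B n)) * e n)"
    unfolding \<Phi>_def
  proof (rule DERIV_sum)
    fix n assume "n \<in> {1..N}"
    then have "DERIV (\<lambda>b. \<nu> n * \<beta> n * power_for_rate (g n) (s2 n) (rate (g n) (s2 n) (p n) (B n)) b)
        (B n + 0 * e n) :> - bandwidth_price (g n) (s2 n) (\<beta> n) (\<nu> n) (g n * p n / (s2 n * B n))"
      using power_for_rate_has_derivative params B by simp
    moreover have "DERIV (\<lambda>\<delta>. B n + \<delta> * e n) 0 :> e n" by (auto intro!: derivative_eq_intros)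
    ultimately show "DERIV (\<lambda>\<delta>. \<nu> n * \<beta> n *
        power_for_rate (g n) (s2 n) (rate (g n) (s2 n) (p n) (B n)) (B n + \<delta> * e n)) 0
        :> - bandwidth_price (g n) (s2 n) (\<beta> n) (\<nu> n) (g n * p n / (s2 n * B n)) * e n"
      by (rule DERIV_chain2)
  qed
  have min: "\<forall>\<delta>. \<bar>0 - \<delta>\<bar> < d \<longrightarrow> \<Phi> 0 \<le> \<Phi> \<delta>"
  proof (intro allI impI)
    fix \<delta> :: real assume "\<bar>0 - \<delta>\<bar> < d"
    then have "\<Phi> 0 = (\<Sum>n\<in>{1..N}. \<nu> n * \<beta> n * p n)"
      unfolding \<Phi>_def using power_for_rate_rate params B by simp
    also have "\<dots> \<le> \<Phi> \<delta>"
      unfolding \<Phi>_def using P3_global_opt_min_weighted_power[OF opt params] feasible \<open>\<bar>0 - \<delta>\<bar> < d\<close>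
      by simp
    finally show "\<Phi> 0 \<le> \<Phi> \<delta>" .
  qed
  from DERIV_local_min[OF deriv \<open>0 < d\<close> min] show ?thesis by (simp add: sum_negf)
qed

lemma P3_global_opt_full_bandwidth:
  assumes opt: "P3_global_opt N Btot g s2 pcir c re rmin f \<beta> \<nu> p B"
    and params: "\<forall>n\<in>{1..N}. 0 < g n \<and> 0 < s2 n \<and> 0 < rmin n \<and> 0 < \<beta> n \<and> 0 < \<nu> n"
    and a: "a \<in> {1..N}"
  shows "(\<Sum>n\<in>{1..N}. B n) = Btot"
proof (rule ccontr)
  have adm: "\<forall>n\<in>{1..N}. user_admissible (g n) (s2 n) (re n) (rmin n) (f n) (p n) (B n)"
    and sumB: "(\<Sum>n\<in>{1..N}. B n) \<le> Btot"
    using opt unfolding P3_global_opt_def P3_admissible_iff by blast+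
  then have pos: "\<forall>n\<in>{1..N}. 0 < B n" unfolding user_admissible_def by blast
  assume "(\<Sum>n\<in>{1..N}. B n) \<noteq> Btot"
  with sumB have slack: "0 < Btot - (\<Sum>n\<in>{1..N}. B n)" by simp
  have "0 < g a * p a / (s2 a * B a)" using user_admissible_snr_pos adm params a by blast
  define e where "e n = (if n = a then 1 else 0 :: real)" for n
  have sum_e: "(\<Sum>n\<in>{1..N}. h n * e n) = h a" for h :: "nat \<Rightarrow> real"
    unfolding e_def using a by (simp add: if_distrib cong: if_cong)
  have "(\<Sum>n\<in>{1..N}. bandwidth_price (g n) (s2 n) (\<beta> n) (\<nu> n) (g n * p n / (s2 n * B n)) * e n) = 0"
  proof (rule P3_global_opt_price_balance[OF opt])
    show "0 < min (B a) (Btot - (\<Sum>n\<in>{1..N}. B n))" using pos a slack by simp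
    fix \<delta> :: real assume \<delta>: "\<bar>\<delta>\<bar> < min (B a) (Btot - (\<Sum>n\<in>{1..N}. B n))"
    have "(\<Sum>n\<in>{1..N}. B n + \<delta> * e n) = (\<Sum>n\<in>{1..N}. B n) + \<delta>"
      unfolding sum.distrib using sum_e[of "\<lambda>_. \<delta>"] by simp
    then show "(\<forall>n\<in>{1..N}. 0 < B n + \<delta> * e n) \<and> (\<Sum>n\<in>{1..N}. B n + \<delta> * e n) \<le> Btot"
      using pos \<delta> unfolding e_def by auto
  qed (use params in blast)
  moreover have "0 < bandwidth_price (g a) (s2 a) (\<beta> a) (\<nu> a) (g a * p a / (s2 a * B a))"
    using bandwidth_price_pos params a \<open>0 < g a * p a / (s2 a * B a)\<close> by simp
  ultimately show False using sum_e by simp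
qed

lemma sum_mult_delta_diff:
  fixes h :: "'a \<Rightarrow> real"
  assumes "finite A" "a \<in> A" "b \<in> A" "a \<noteq> b"
  shows "(\<Sum>n\<in>A. h n * ((if n = a then 1 else 0) - (if n = b then 1 else 0))) = h a - h b"
proof -
  have "(\<Sum>n\<in>A. h n * ((if n = a then 1 else 0) - (if n = b then 1 else 0)))
      = (\<Sum>n\<in>A. if n = a then h n else 0) - (\<Sum>n\<in>A. if n = b then h n else 0)"
    unfolding sum_subtractf[symmetric] by (rule sum.cong) auto
  then show ?thesis using assms by simp
qed

lemma P3_global_opt_equal_prices:
  assumes opt: "P3_global_opt N Btot g s2 pcir c re rmin f \<beta> \<nu> p B"
    and params: "\<forall>n\<in>{1..N}. 0 < g n \<and> 0 < s2 n"
    and "a \<in> {1..N}" "b \<in> {1..N}"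
  shows "bandwidth_price (g a) (s2 a) (\<beta> a) (\<nu> a) (g a * p a / (s2 a * B a))
           = bandwidth_price (g b) (s2 b) (\<beta> b) (\<nu> b) (g b * p b / (s2 b * B b))"
proof (cases "a = b")
  case False
  define e where "e n = (if n = a then 1 else 0) - (if n = b then 1 else 0 :: real)" for n
  have pos: "\<forall>n\<in>{1..N}. 0 < B n" and sumB: "(\<Sum>n\<in>{1..N}. B n) \<le> Btot"
    using opt unfolding P3_global_opt_def P3_admissible_iff user_admissible_def by auto
  have "(\<Sum>n\<in>{1..N}. bandwidth_price (g n) (s2 n) (\<beta> n) (\<nu> n) (g n * p n / (s2 n * B n)) * e n) = 0"
  proof (rule P3_global_opt_price_balance[OF opt params])
    show "0 < min (B a) (B b)" using pos assms(3,4) by simp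
    fix \<delta> :: real assume "\<bar>\<delta>\<bar> < min (B a) (B b)"
    moreover have "(\<Sum>n\<in>{1..N}. B n + \<delta> * e n) = (\<Sum>n\<in>{1..N}. B n)"
      unfolding e_def sum.distrib using sum_mult_delta_diff[of "{1..N}" a b "\<lambda>_. \<delta>"] assms(3,4) False
      by simp
    ultimately show "(\<forall>n\<in>{1..N}. 0 < B n + \<delta> * e n) \<and> (\<Sum>n\<in>{1..N}. B n + \<delta> * e n) \<le> Btot"
      using pos sumB unfolding e_def by auto
  qed
  moreover have "(\<Sum>n\<in>{1..N}. bandwidth_price (g n) (s2 n) (\<beta> n) (\<nu> n) (g n * p n / (s2 n * B n)) * e n)
      = bandwidth_price (g a) (s2 a) (\<beta> a) (\<nu> a) (g a * p a / (s2 a * B a))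
        - bandwidth_price (g b) (s2 b) (\<beta> b) (\<nu> b) (g b * p b / (s2 b * B b))"
    unfolding e_def by (rule sum_mult_delta_diff) (use assms(3,4) False in auto)
  ultimately show ?thesis by simp
qed simp

lemma P3_global_opt_common_price:
  assumes opt: "P3_global_opt N Btot g s2 pcir c re rmin f \<beta> \<nu> p B"
    and params: "\<forall>n\<in>{1..N}. 0 < g n \<and> 0 < s2 n \<and> 0 < rmin n \<and> 0 < \<beta> n \<and> 0 < \<nu> n"
    and "1 \<le> N"
  shows "\<exists>lam>0. \<forall>n\<in>{1..N}. psi (g n) (s2 n) (\<beta> n) (\<nu> n) lam = g n * p n / (s2 n * B n)"
proof -
  define price where "price n = bandwidth_price (g n) (s2 n) (\<beta> n) (\<nu> n) (g n * p n / (s2 n * B n))" for n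
  have "1 \<in> {1..N}" using \<open>1 \<le> N\<close> by simp
  have snr_pos: "0 < g n * p n / (s2 n * B n)" if "n \<in> {1..N}" for n
    using opt params that user_admissible_snr_pos unfolding P3_global_opt_def P3_admissible_iff by blast
  have "0 < price 1" unfolding price_def using bandwidth_price_pos snr_pos \<open>1 \<in> {1..N}\<close> params by simp
  moreover have "psi (g n) (s2 n) (\<beta> n) (\<nu> n) (price 1) = g n * p n / (s2 n * B n)" if "n \<in> {1..N}" for n
    using P3_global_opt_equal_prices[OF opt _ \<open>1 \<in> {1..N}\<close> that] psi_bandwidth_price snr_pos that params
    unfolding price_def by auto
  ultimately show ?thesis by blast
qed

lemma P3_global_opt_user_gammas:
  assumes opt: "P3_global_opt N Btot g s2 pcir c re rmin f \<beta> \<nu> p B"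
    and params: "\<forall>n\<in>{1..N}. 0 < g n \<and> 0 < s2 n \<and> 0 < c n \<and> 0 < \<beta> n \<and> 0 < \<nu> n
                             \<and> re n \<le> rmin n \<and> 0 < rmin n"
    and f_deriv: "\<forall>n\<in>{1..N}. \<forall>x>0. (f n has_real_derivative fd n x) (at x)"
    and fd_deriv_nonpos: "\<forall>n\<in>{1..N}. \<forall>x>0. \<exists>d. (fd n has_real_derivative d) (at x) \<and> d \<le> 0"
  shows "\<exists>gam. \<forall>n\<in>{1..N}. gamma_spec (fd n) (re n) (\<beta> n) (s2 n) (c n) (g n) (g n * p n / (s2 n * B n)) (gam n)
                            \<and> max (gam n) (rmin n) = rate (g n) (s2 n) (p n) (B n)"
proof (rule bchoice, rule ballI)
  fix n assume n: "n \<in> {1..N}"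
  interpret optimal_user_power "g n" "s2 n" "c n" "\<beta> n" "re n" "rmin n" "B n" "p n" "f n" "fd n"
  proof
    show "user_admissible (g n) (s2 n) (re n) (rmin n) (f n) (p n) (B n)"
      using opt n unfolding P3_global_opt_def P3_admissible_iff by blast
    show "\<And>a b. 0 < a \<Longrightarrow> a \<le> b \<Longrightarrow> fd n b \<le> fd n a"
      using DERIV_nonpos_imp_nonincreasing[of _ _ "fd n"] fd_deriv_nonpos n by force
  qed (use params f_deriv n P3_global_opt_single_user[OF opt n] in auto)
  show "\<exists>gam. gamma_spec (fd n) (re n) (\<beta> n) (s2 n) (c n) (g n) (g n * p n / (s2 n * B n)) gam
              \<and> max gam (rmin n) = rate (g n) (s2 n) (p n) (B n)"
    using user_gamma .
qed

lemma Bcal_snr: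
  assumes "0 < g * p / (s2 * B)" "max gam rmin = rate g s2 p B"
  shows "Bcal gam rmin (g * p / (s2 * B)) = B"
proof -
  have "0 < log 2 (1 + g * p / (s2 * B))" using assms(1) by simp
  then show ?thesis using assms(2) unfolding Bcal_def rate_def by simp
qed

theorem theorem2:
  fixes N :: nat and Btot :: real
    and g s2 pcir c re rmin \<beta> \<nu> p B :: "nat \<Rightarrow> real"
    and f fd :: "nat \<Rightarrow> real \<Rightarrow> real"
  assumes "N \<ge> 1" and "Btot > 0"
    and "\<forall>n\<in>{1..N}. g n > 0 \<and> s2 n > 0 \<and> pcir n > 0 \<and> c n > 0 \<and> re n \<ge> 0
                     \<and> rmin n > 0 \<and> rmin n \<ge> re n"
    and "\<forall>n\<in>{1..N}. \<forall>x>0. (f n has_real_derivative fd n x) (at x) \<and> fd n x > 0"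
    and "\<forall>n\<in>{1..N}. \<forall>x>0. \<exists>d. (fd n has_real_derivative d) (at x) \<and> d \<le> 0"
    and "\<forall>n\<in>{1..N}. \<beta> n > 0 \<and> \<nu> n > 0"
    and "P3_global_opt N Btot g s2 pcir c re rmin f \<beta> \<nu> p B"
  shows "\<exists>lam>0. \<exists>gam :: nat \<Rightarrow> real.
           (\<forall>n\<in>{1..N}. gamma_spec (fd n) (re n) (\<beta> n) (s2 n) (c n) (g n)
                          (psi (g n) (s2 n) (\<beta> n) (\<nu> n) lam) (gam n)) \<and>
           (\<Sum>n\<in>{1..N}. Bcal (gam n) (rmin n) (psi (g n) (s2 n) (\<beta> n) (\<nu> n) lam)) = Btot \<and>
           (\<forall>n\<in>{1..N}.
              B n = Bcal (gam n) (rmin n) (psi (g n) (s2 n) (\<beta> n) (\<nu> n) lam) \<and>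
              p n = s2 n * B n * psi (g n) (s2 n) (\<beta> n) (\<nu> n) lam / g n)"
proof -
  have params: "\<forall>n\<in>{1..N}. 0 < g n \<and> 0 < s2 n \<and> 0 < rmin n \<and> 0 < \<beta> n \<and> 0 < \<nu> n"
    using assms(3,6) by auto
  obtain lam where "0 < lam"
    and psi_lam: "\<forall>n\<in>{1..N}. psi (g n) (s2 n) (\<beta> n) (\<nu> n) lam = g n * p n / (s2 n * B n)"
    using P3_global_opt_common_price[OF assms(7) params \<open>N \<ge> 1\<close>] by blast
  have "\<forall>n\<in>{1..N}. 0 < g n \<and> 0 < s2 n \<and> 0 < c n \<and> 0 < \<beta> n \<and> 0 < \<nu> n \<and> re n \<le> rmin n \<and> 0 < rmin n"
    and "\<forall>n\<in>{1..N}. \<forall>x>0. (f n has_real_derivative fd n x) (at x)"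
    using assms(3,4,6) by auto
  from P3_global_opt_user_gammas[OF assms(7) this assms(5)] obtain gam where
    gam: "\<forall>n\<in>{1..N}. gamma_spec (fd n) (re n) (\<beta> n) (s2 n) (c n) (g n) (g n * p n / (s2 n * B n)) (gam n)
                      \<and> max (gam n) (rmin n) = rate (g n) (s2 n) (p n) (B n)"
    by blast
  have adm: "\<forall>n\<in>{1..N}. user_admissible (g n) (s2 n) (re n) (rmin n) (f n) (p n) (B n)"
    using assms(7) unfolding P3_global_opt_def P3_admissible_iff by blast
  have B_eq: "B n = Bcal (gam n) (rmin n) (psi (g n) (s2 n) (\<beta> n) (\<nu> n) lam)"
    and p_eq: "p n = s2 n * B n * psi (g n) (s2 n) (\<beta> n) (\<nu> n) lam / g n" if n: "n \<in> {1..N}" for n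
  proof -
    have "0 < g n * p n / (s2 n * B n)" using user_admissible_snr_pos adm params n by blast
    then show "B n = Bcal (gam n) (rmin n) (psi (g n) (s2 n) (\<beta> n) (\<nu> n) lam)"
      using Bcal_snr[of "g n" "p n" "s2 n" "B n" "gam n" "rmin n"] gam psi_lam n by simp
    have "B n \<noteq> 0" "g n \<noteq> 0" "s2 n \<noteq> 0"
      using bspec[OF adm n] bspec[OF params n] unfolding user_admissible_def by auto
    moreover have "psi (g n) (s2 n) (\<beta> n) (\<nu> n) lam = g n * p n / (s2 n * B n)"
      using psi_lam n by blast
    ultimately show "p n = s2 n * B n * psi (g n) (s2 n) (\<beta> n) (\<nu> n) lam / g n" by simp
  qed
  have full: "(\<Sum>n\<in>{1..N}. B n) = Btot"
    using P3_global_opt_full_bandwidth[OF assms(7) params, of 1] \<open>N \<ge> 1\<close> by simp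
  show ?thesis
  proof (intro exI[of _ lam] conjI exI[of _ gam] ballI \<open>0 < lam\<close>)
    show "(\<Sum>n\<in>{1..N}. Bcal (gam n) (rmin n) (psi (g n) (s2 n) (\<beta> n) (\<nu> n) lam)) = Btot"
      unfolding full[symmetric] by (rule sum.cong) (use B_eq in simp_all)
  next
    fix n assume n: "n \<in> {1..N}"
    then show "gamma_spec (fd n) (re n) (\<beta> n) (s2 n) (c n) (g n) (psi (g n) (s2 n) (\<beta> n) (\<nu> n) lam) (gam n)"
      using gam psi_lam by simp
    show "B n = Bcal (gam n) (rmin n) (psi (g n) (s2 n) (\<beta> n) (\<nu> n) lam)" using B_eq[OF n] .
    show "p n = s2 n * B n * psi (g n) (s2 n) (\<beta> n) (\<nu> n) lam / g n" using p_eq[OF n] .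
  qed
qed

end
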